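(* Let $R\subset S$ be a distributive FCP ring extension. Then $\mathcal S[R,T]=\mathcal S[R,S]\cap T$ for each $T\in[R,S]$ with $T\neq R$.
   Context: All rings are commutative with identity. $[R,S]$ is the lattice of $R$-subalgebras of $S$ (meet = intersection, join = product). FCP: every chain in $[R,S]$ is finite. $T\subset U$ minimal means $[T,U]=\{T,U\}$; an atom of $[R,T]$ is $A$ with $R\subset A$ minimal and $A\subseteq T$; the socle $\mathcal S[R,T]$ is the product of all atoms of $[R,T]$. The extension is distributive if the lattice $[R,S]$ is distributive. *)

theory Defs
  imports Main
begin

text \<open>Rings are modelled as subrings (sets) of an ambient commutative ring type.\<close>

definition subring :: "'a::comm_ring_1 set \<Rightarrow> bool" where
  "subring A \<longleftrightarrow> 0 \<in> A \<and> 1 \<in> A \<and> (\<forall>x\<in>A. \<forall>y\<in>A. x + y \<in> A \<and> x * y \<in> A) \<and> (\<forall>x\<in>A. - x \<in> A)"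

definition interval :: "'a::comm_ring_1 set \<Rightarrow> 'a set \<Rightarrow> 'a set set" where
  "interval R S = {T. subring T \<and> R \<subseteq> T \<and> T \<subseteq> S}"

definition product :: "'a::comm_ring_1 set \<Rightarrow> 'a set set \<Rightarrow> 'a set" where
  "product R F = \<Inter>{U. subring U \<and> R \<subseteq> U \<and> \<Union>F \<subseteq> U}"

definition join :: "'a::comm_ring_1 set \<Rightarrow> 'a set \<Rightarrow> 'a set \<Rightarrow> 'a set" where
  "join R A B = product R {A, B}"

definition FCP :: "'a::comm_ring_1 set \<Rightarrow> 'a set \<Rightarrow> bool" where
  "FCP R S \<longleftrightarrow> (\<forall>C. C \<subseteq> interval R S \<and> (\<forall>A\<in>C. \<forall>B\<in>C. A \<subseteq> B \<or> B \<subseteq> A) \<longrightarrow> finite C)"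

definition minimal_ext :: "'a::comm_ring_1 set \<Rightarrow> 'a set \<Rightarrow> bool" where
  "minimal_ext T U \<longleftrightarrow> T \<subset> U \<and> interval T U = {T, U}"

definition atoms :: "'a::comm_ring_1 set \<Rightarrow> 'a set \<Rightarrow> 'a set set" where
  "atoms R T = {A. minimal_ext R A \<and> A \<subseteq> T}"

definition socle :: "'a::comm_ring_1 set \<Rightarrow> 'a set \<Rightarrow> 'a set" where
  "socle R T = product R (atoms R T)"

definition distributive_ext :: "'a::comm_ring_1 set \<Rightarrow> 'a set \<Rightarrow> bool" where
  "distributive_ext R S \<longleftrightarrow>
     (\<forall>A\<in>interval R S. \<forall>B\<in>interval R S. \<forall>C\<in>interval R S.
        A \<inter> join R B C = join R (A \<inter> B) (A \<inter> C))"

end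

theory Submission
  imports Defs
begin

text \<open>In a distributive lattice [R,S], meeting an element X with a join of atoms keeps exactly
  the atoms below X, since X \<inter> A is R or A for every atom A. Taking X = T and the join of all
  atoms of [R,S] gives the claim, once FCP ensures there are only finitely many atoms: an infinite
  sequence of distinct atoms would produce an infinite strictly increasing chain of their
  partial joins.\<close>

lemma subring_Inter: "(\<And>U. U \<in> M \<Longrightarrow> subring U) \<Longrightarrow> subring (\<Inter>M)"
  unfolding subring_def by blast

lemma subring_Int: "subring A \<Longrightarrow> subring B \<Longrightarrow> subring (A \<inter> B)"
  using subring_Inter[of "{A, B}"] by auto

lemma subring_product: "subring (product R F)"
  unfolding product_def by (rule subring_Inter) blast

lemma base_subset_product: "R \<subseteq> product R F"
  unfolding product_def by blast

lemma Union_subset_product: "\<Union>F \<subseteq> product R F"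
  unfolding product_def by blast

lemma product_least: "subring U \<Longrightarrow> R \<subseteq> U \<Longrightarrow> \<Union>F \<subseteq> U \<Longrightarrow> product R F \<subseteq> U"
  unfolding product_def by blast

lemma product_in_interval:
  "subring S \<Longrightarrow> R \<subseteq> S \<Longrightarrow> \<Union>F \<subseteq> S \<Longrightarrow> product R F \<in> interval R S"
  unfolding interval_def using subring_product base_subset_product product_least by blast

lemma product_empty: "subring R \<Longrightarrow> product R {} = R"
  using base_subset_product[of R "{}"] product_least[of R R "{}"] by auto

lemma product_mono: "F \<subseteq> G \<Longrightarrow> product R F \<subseteq> product R G"
  by (rule product_least[OF subring_product base_subset_product])
    (use Union_subset_product in blast)

lemma product_insert: "product R (insert A F) = join R A (product R F)"
  unfolding join_def
proof (rule antisym)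
  show "product R (insert A F) \<subseteq> product R {A, product R F}"
    using Union_subset_product[of "{A, product R F}" R] Union_subset_product[of F R]
    by (intro product_least[OF subring_product base_subset_product]) auto
  show "product R {A, product R F} \<subseteq> product R (insert A F)"
    using Union_subset_product[of "insert A F" R] product_mono[of F "insert A F" R]
    by (intro product_least[OF subring_product base_subset_product]) auto
qed

lemma join_base_left: "subring P \<Longrightarrow> R \<subseteq> P \<Longrightarrow> join R R P = P"
  unfolding join_def
  using base_subset_product[of R "{R, P}"] Union_subset_product[of "{R, P}" R]
    product_least[of P R "{R, P}"]
  by auto

lemma atomsD:
  assumes "A \<in> atoms R S"
  shows "subring R" "subring A" "R \<subset> A" "A \<subseteq> S" "interval R A = {R, A}"
proof -
  have interval: "interval R A = {R, A}" and "R \<subset> A" "A \<subseteq> S"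
    using assms unfolding atoms_def minimal_ext_def by auto
  moreover have "R \<in> interval R A" "A \<in> interval R A"
    using interval by auto
  ultimately show "subring R" "subring A" "R \<subset> A" "A \<subseteq> S" "interval R A = {R, A}"
    unfolding interval_def by auto
qed

lemma atom_in_interval: "A \<in> atoms R S \<Longrightarrow> A \<in> interval R S"
  using atomsD[of A R S] unfolding interval_def by auto

lemma atoms_subset_eq: "A \<in> atoms R S \<Longrightarrow> B \<in> atoms R S \<Longrightarrow> A \<subseteq> B \<Longrightarrow> A = B"
  using atomsD[of A R S] atomsD(5)[of B R S] unfolding interval_def by auto

lemma atoms_subset: "T \<subseteq> S \<Longrightarrow> atoms R T = {A \<in> atoms R S. A \<subseteq> T}"
  unfolding atoms_def by auto

lemma Int_atom_eq_base:
  assumes "A \<in> atoms R S" "subring X" "R \<subseteq> X" "\<not> A \<subseteq> X"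
  shows "X \<inter> A = R"
proof -
  have "X \<inter> A \<in> interval R A"
    using subring_Int[OF assms(2) atomsD(2)[OF assms(1)]] assms(3) atomsD(3)[OF assms(1)]
    unfolding interval_def by auto
  then show ?thesis
    using atomsD(5)[OF assms(1)] assms(4) by auto
qed

lemma Int_product_atoms:
  assumes "subring S" "R \<subseteq> S" "distributive_ext R S"
    and "finite F" "F \<subseteq> atoms R S" "X \<in> interval R S"
  shows "X \<inter> product R F = product R {A \<in> F. A \<subseteq> X}"
  using assms(4,5)
proof (induction F rule: finite_induct)
  case empty
  have "product R {} \<subseteq> X"
    using assms(6) unfolding interval_def by (intro product_least) auto
  then show ?case
    by auto
next
  case (insert A F)
  have X: "subring X" "R \<subseteq> X"
    using assms(6) unfolding interval_def by auto
  have A: "A \<in> atoms R S"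
    using insert.prems by auto
  have "product R F \<in> interval R S"
    using insert.prems atomsD(4) by (intro product_in_interval[OF assms(1,2)]) blast
  then have "X \<inter> product R (insert A F) = join R (X \<inter> A) (X \<inter> product R F)"
    using assms(3,6) atom_in_interval[OF A] unfolding distributive_ext_def product_insert by blast
  also have "\<dots> = join R (X \<inter> A) (product R {B \<in> F. B \<subseteq> X})"
    using insert by auto
  also have "\<dots> = product R {B \<in> insert A F. B \<subseteq> X}"
  proof (cases "A \<subseteq> X")
    case True
    then have "{B \<in> insert A F. B \<subseteq> X} = insert A {B \<in> F. B \<subseteq> X}"
      by auto
    with True show ?thesis
      by (simp add: product_insert Int_absorb1)
  next
    case False
    then have "{B \<in> insert A F. B \<subseteq> X} = {B \<in> F. B \<subseteq> X}"
      by auto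
    with False show ?thesis
      using Int_atom_eq_base[OF A X False] join_base_left[OF subring_product base_subset_product]
      by simp
  qed
  finally show ?case .
qed

lemma atom_not_subset_product_other_atoms:
  assumes "subring S" "R \<subseteq> S" "distributive_ext R S"
    and "finite F" "F \<subseteq> atoms R S" "A \<in> atoms R S" "A \<notin> F"
  shows "\<not> A \<subseteq> product R F"
proof -
  have "A \<inter> product R F = product R {B \<in> F. B \<subseteq> A}"
    by (rule Int_product_atoms[OF assms(1-5) atom_in_interval[OF assms(6)]])
  also have "{B \<in> F. B \<subseteq> A} = {}"
    using assms(5-7) atoms_subset_eq by blast
  also have "product R {} = R"
    by (rule product_empty[OF atomsD(1)[OF assms(6)]])
  finally show ?thesis
    using atomsD(3)[OF assms(6)] by auto
qed

lemma FCP_not_strict_mono: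
  fixes P :: "nat \<Rightarrow> 'a::comm_ring_1 set"
  assumes "FCP R S" "range P \<subseteq> interval R S"
  shows "\<not> strict_mono P"
proof
  assume mono: "strict_mono P"
  have "\<forall>A\<in>range P. \<forall>B\<in>range P. A \<subseteq> B \<or> B \<subseteq> A"
    using strict_mono_less_eq[OF mono] nat_le_linear by auto
  then have "finite (range P)"
    using assms unfolding FCP_def by blast
  then show False
    using strict_mono_imp_inj_on[OF mono] finite_imageD[of P UNIV] by auto
qed

lemma finite_atoms:
  assumes "subring S" "R \<subseteq> S" "distributive_ext R S" "FCP R S"
  shows "finite (atoms R S)"
proof (rule ccontr)
  assume "infinite (atoms R S)"
  then obtain f :: "nat \<Rightarrow> 'a set" where f: "inj f" "range f \<subseteq> atoms R S"
    using infinite_countable_subset by blast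
  define P where "P n = product R (f ` {..<n})" for n
  have "\<Union>(f ` {..<n}) \<subseteq> S" for n
    using f(2) atomsD(4) by blast
  then have "range P \<subseteq> interval R S"
    unfolding P_def using product_in_interval[OF assms(1,2)] by blast
  moreover have "P n \<subset> P (Suc n)" for n
  proof -
    have "P n \<subseteq> P (Suc n)"
      unfolding P_def by (intro product_mono) auto
    moreover have "f n \<subseteq> P (Suc n)"
      unfolding P_def using Union_subset_product[of "f ` {..<Suc n}" R] by auto
    moreover have "\<not> f n \<subseteq> P n"
      unfolding P_def using f(2) inj_image_mem_iff[OF f(1)]
      by (intro atom_not_subset_product_other_atoms[OF assms(1-3)]) auto
    ultimately show ?thesis
      by auto
  qed
  then have "strict_mono P"
    by (simp add: strict_mono_Suc_iff)
  ultimately show False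
    using FCP_not_strict_mono[OF assms(4)] by blast
qed

theorem corollary8p21:
  fixes R S T :: "'a::comm_ring_1 set"
  assumes "subring R" and "subring S" and "R \<subset> S"
    and "FCP R S" and "distributive_ext R S"
    and "T \<in> interval R S" and "T \<noteq> R"
  shows "socle R T = socle R S \<inter> T"
proof -
  have "R \<subseteq> S"
    using assms(3) by auto
  have "atoms R T = {A \<in> atoms R S. A \<subseteq> T}"
    using assms(6) atoms_subset unfolding interval_def by blast
  moreover have "T \<inter> product R (atoms R S) = product R {A \<in> atoms R S. A \<subseteq> T}"
    using Int_product_atoms[OF assms(2) \<open>R \<subseteq> S\<close> assms(5)
        finite_atoms[OF assms(2) \<open>R \<subseteq> S\<close> assms(5,4)] _ assms(6)]
    by simp
  ultimately show ?thesis
    unfolding socle_def by auto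
qed

end
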